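(* Consider the weak GIC with power budgets $P_1,P_2$ and a weight $\mu>0$, and consider superposition schemes in which user $i$ transmits a sum of independent Gaussian public and private code-books with public power $P_i^{(public)}$ and private power $P_i^{(private)}$, subject to $P_i^{(public)}+P_i^{(private)}\le P_i$. If a scheme maximizes $R_{ws}=R_1+\mu R_2$ over all such schemes, then $P_1^{(public)}+P_1^{(private)}=P_1$ and $P_2^{(public)}+P_2^{(private)}=P_2$; i.e., the power budgets are fully used.
   Context: Two-user weak Gaussian interference channel with unit noise: $Y_1=X_1+\sqrt{a}X_2+Z_1$, $Y_2=\sqrt{b}X_1+X_2+Z_2$, $Z_1,Z_2\sim N(0,1)$ independent of the inputs, $0<a<1$, $0<b<1$. Public code-books are decoded at both receivers (rates must be decodable at both), private code-books only at their intended receiver after removing public ones, treating the other user's private signal as noise. $R_i$ is the total (public plus private) rate of user $i$. *)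

theory Defs
  imports Complex_Main
begin

definition gcap :: "real \<Rightarrow> real" where
  "gcap x = 1/2 * log 2 (1 + x)"

text \<open>A superposition (Han-Kobayashi type) scheme for the weak Gaussian IC
  Y1 = X1 + sqrt a X2 + Z1, Y2 = sqrt b X1 + X2 + Z2.
  User i sends independent Gaussian public code-book of power Qc_i (rate T_i) and
  private code-book of power Qp_i (rate S_i); total rate R_i = T_i + S_i.
  Public messages are jointly decoded at both receivers (MAC constraints), treating
  all private signals as noise; then the own private message is decoded after removing
  the public ones, treating the other user's private signal as noise.\<close>
definition hk_feasible ::
  "real \<Rightarrow> real \<Rightarrow> real \<Rightarrow> real \<Rightarrow>
   real \<Rightarrow> real \<Rightarrow> real \<Rightarrow> real \<Rightarrow>
   real \<Rightarrow> real \<Rightarrow> real \<Rightarrow> real \<Rightarrow> bool" where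
  "hk_feasible a b P1 P2 Qc1 Qp1 Qc2 Qp2 T1 S1 T2 S2 \<longleftrightarrow>
     0 \<le> Qc1 \<and> 0 \<le> Qp1 \<and> 0 \<le> Qc2 \<and> 0 \<le> Qp2 \<and>
     Qc1 + Qp1 \<le> P1 \<and> Qc2 + Qp2 \<le> P2 \<and>
     0 \<le> T1 \<and> 0 \<le> S1 \<and> 0 \<le> T2 \<and> 0 \<le> S2 \<and>
     \<comment> \<open>public messages decoded jointly at receiver 1\<close>
     (let N1 = 1 + Qp1 + a * Qp2 in
        T1 \<le> gcap (Qc1 / N1) \<and> T2 \<le> gcap (a * Qc2 / N1) \<and>
        T1 + T2 \<le> gcap ((Qc1 + a * Qc2) / N1)) \<and>
     \<comment> \<open>public messages decoded jointly at receiver 2\<close>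
     (let N2 = 1 + b * Qp1 + Qp2 in
        T1 \<le> gcap (b * Qc1 / N2) \<and> T2 \<le> gcap (Qc2 / N2) \<and>
        T1 + T2 \<le> gcap ((b * Qc1 + Qc2) / N2)) \<and>
     \<comment> \<open>private messages, other private signal treated as noise\<close>
     S1 \<le> gcap (Qp1 / (1 + a * Qp2)) \<and>
     S2 \<le> gcap (Qp2 / (1 + b * Qp1))"

end

theory Submission
  imports Defs
begin

text \<open>Unused power can always be added to the public code-book: it raises the signal in every
  public-decoding constraint while leaving every noise term unchanged, so all constraints on the
  public rate become strict and that rate can be raised.\<close>

lemma gcap_strict_mono: "0 \<le> x \<Longrightarrow> x < y \<Longrightarrow> gcap x < gcap y"
  unfolding gcap_def by simp

lemma gcap_bound_strict:
  assumes "T \<le> gcap (x / N)" "0 \<le> x" "x < y" "0 < N"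
  shows "T < gcap (y / N)"
  using assms by (auto intro!: le_less_trans[OF _ gcap_strict_mono] divide_strict_right_mono)

lemma hk_feasible_swap_users:
  "hk_feasible a b P1 P2 Qc1 Qp1 Qc2 Qp2 T1 S1 T2 S2 \<longleftrightarrow>
   hk_feasible b a P2 P1 Qc2 Qp2 Qc1 Qp1 T2 S2 T1 S1"
  unfolding hk_feasible_def Let_def by (auto simp: ac_simps)

lemma hk_feasible_power_le:
  "hk_feasible a b P1 P2 Qc1 Qp1 Qc2 Qp2 T1 S1 T2 S2 \<Longrightarrow> Qc1 + Qp1 \<le> P1"
  unfolding hk_feasible_def Let_def by (elim conjE)

lemma hk_feasible_raise_public_rate:
  assumes feas: "hk_feasible a b P1 P2 Qc1 Qp1 Qc2 Qp2 T1 S1 T2 S2"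
    and "0 < a" "0 < b" and slack: "Qc1 + Qp1 < P1"
  shows "\<exists>e>0. hk_feasible a b P1 P2 (P1 - Qp1) Qp1 Qc2 Qp2 (T1 + e) S1 T2 S2"
proof -
  define N1 where "N1 = 1 + Qp1 + a * Qp2"
  define N2 where "N2 = 1 + b * Qp1 + Qp2"
  define Q where "Q = P1 - Qp1"
  have bounds: "0 \<le> Qc1" "0 \<le> Qp1" "0 \<le> Qc2" "0 \<le> Qp2" "0 \<le> T1"
     "T1 \<le> gcap (Qc1 / N1)" "T1 + T2 \<le> gcap ((Qc1 + a * Qc2) / N1)"
     "T1 \<le> gcap (b * Qc1 / N2)" "T1 + T2 \<le> gcap ((b * Qc1 + Qc2) / N2)"
    using feas unfolding hk_feasible_def Let_def N1_def N2_def by auto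
  have "0 < N1" "0 < N2"
    using bounds \<open>0 < a\<close> \<open>0 < b\<close> unfolding N1_def N2_def by (auto intro!: add_pos_nonneg)
  have "Qc1 < Q" using slack unfolding Q_def by simp
  then have "b * Qc1 < b * Q" using \<open>0 < b\<close> by simp
  define e where "e = min (min (gcap (Q / N1) - T1) (gcap (b * Q / N2) - T1))
       (min (gcap ((Q + a * Qc2) / N1) - (T1 + T2)) (gcap ((b * Q + Qc2) / N2) - (T1 + T2)))"
  have "T1 < gcap (Q / N1)"
    using gcap_bound_strict[OF bounds(6)] bounds(1) \<open>Qc1 < Q\<close> \<open>0 < N1\<close> by blast
  moreover have "T1 < gcap (b * Q / N2)"
    using gcap_bound_strict[OF bounds(8)] bounds(1) \<open>b * Qc1 < b * Q\<close> \<open>0 < N2\<close> \<open>0 < b\<close> by simp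
  moreover have "T1 + T2 < gcap ((Q + a * Qc2) / N1)"
    using gcap_bound_strict[OF bounds(7)] bounds(1,3) \<open>Qc1 < Q\<close> \<open>0 < N1\<close> \<open>0 < a\<close> by simp
  moreover have "T1 + T2 < gcap ((b * Q + Qc2) / N2)"
    using gcap_bound_strict[OF bounds(9)] bounds(1,3) \<open>b * Qc1 < b * Q\<close> \<open>0 < N2\<close> \<open>0 < b\<close> by simp
  ultimately have "0 < e" unfolding e_def by simp
  moreover have "hk_feasible a b P1 P2 Q Qp1 Qc2 Qp2 (T1 + e) S1 T2 S2"
  proof -
    have "T1 + e \<le> gcap (Q / N1)" "T1 + e \<le> gcap (b * Q / N2)"
         "T1 + e + T2 \<le> gcap ((Q + a * Qc2) / N1)" "T1 + e + T2 \<le> gcap ((b * Q + Qc2) / N2)"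
      unfolding e_def by linarith+
    moreover have "0 \<le> Q" "Q + Qp1 \<le> P1" using bounds(1) \<open>Qc1 < Q\<close> unfolding Q_def by simp_all
    ultimately show ?thesis
      using feas bounds(5) \<open>0 < e\<close>
      unfolding hk_feasible_def Let_def N1_def[symmetric] N2_def[symmetric] by simp
  qed
  ultimately show ?thesis unfolding Q_def by blast
qed

theorem theorem1:
  fixes a b P1 P2 \<mu> :: real
    and Qc1 Qp1 Qc2 Qp2 T1 S1 T2 S2 :: real
  assumes "0 < a" "a < 1" "0 < b" "b < 1"
    and "0 < P1" "0 < P2" "0 < \<mu>"
    and "hk_feasible a b P1 P2 Qc1 Qp1 Qc2 Qp2 T1 S1 T2 S2"
    and "\<forall>qc1 qp1 qc2 qp2 t1 s1 t2 s2.
           hk_feasible a b P1 P2 qc1 qp1 qc2 qp2 t1 s1 t2 s2 \<longrightarrow>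
           (t1 + s1) + \<mu> * (t2 + s2) \<le> (T1 + S1) + \<mu> * (T2 + S2)"
  shows "Qc1 + Qp1 = P1 \<and> Qc2 + Qp2 = P2"
proof -
  note feas = assms(8) and opt = assms(9)[rule_format]
  note feas' = hk_feasible_swap_users[THEN iffD1, OF feas]
  have "\<not> Qc1 + Qp1 < P1"
  proof
    assume "Qc1 + Qp1 < P1"
    then obtain e where "0 < e"
      and raised: "hk_feasible a b P1 P2 (P1 - Qp1) Qp1 Qc2 Qp2 (T1 + e) S1 T2 S2"
      using hk_feasible_raise_public_rate[OF feas assms(1,3)] by blast
    have "(T1 + e + S1) + \<mu> * (T2 + S2) \<le> (T1 + S1) + \<mu> * (T2 + S2)"
      using opt[OF raised] .
    with \<open>0 < e\<close> show False by simp
  qed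
  moreover have "\<not> Qc2 + Qp2 < P2"
  proof
    assume "Qc2 + Qp2 < P2"
    then obtain e where "0 < e"
      and raised: "hk_feasible b a P2 P1 (P2 - Qp2) Qp2 Qc1 Qp1 (T2 + e) S2 T1 S1"
      using hk_feasible_raise_public_rate[OF feas' assms(3,1)] by blast
    have "(T1 + S1) + \<mu> * (T2 + e + S2) \<le> (T1 + S1) + \<mu> * (T2 + S2)"
      using opt[OF hk_feasible_swap_users[THEN iffD2, OF raised]] .
    with mult_pos_pos[OF \<open>0 < \<mu>\<close> \<open>0 < e\<close>] show False by (simp add: algebra_simps)
  qed
  ultimately show ?thesis
    using hk_feasible_power_le[OF feas] hk_feasible_power_le[OF feas'] by linarith
qed

end
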